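(* In the setting described in the context, assume A1$'$, A2 and A3. If there exists $k^\star\in\{1,\dots,K\}$ with $\inf_{\mathbf w\in\mathcal W^*}w_{k^\star}>\frac12$, then $\liminf_{n\to\infty}\Pr\big(Y\in\mathcal C_{\mathrm{comb}}(\mathbf X;\mathcal D_n)\big)\ge1-\alpha$.
   Context: Setting: fix $K\ge2$ and $\alpha\in(0,1)$. For each sample size $n$, on a common probability space there are a random data set $\mathcal D_n$ and a random test pair $(\mathbf X,Y)$ with $\mathbf X\in\mathcal X\subseteq\mathbb R^p$, $Y\in\mathbb R$. For each $k\in\{1,\dots,K\}$ there is a random prediction set $\mathcal C_k(\mathbf X;\mathcal D_n)\subseteq\mathbb R$, determined by $\mathcal D_n$ and $\mathbf X$, such that the events $\{Y\in\mathcal C_k(\mathbf X;\mathcal D_n)\}$ are measurable. Let $\Delta^{K-1}=\{\mathbf w\in[0,1]^K:w_k\ge0,\sum_k w_k=1\}$ and let $\widehat{\mathbf w}_n=(\widehat w_{n,1},\dots,\widehat w_{n,K})$ be a $\sigma(\mathcal D_n)$-measurable random vector in $\Delta^{K-1}$. Let $\mathcal W^*\subseteq\Delta^{K-1}$ be a nonempty closed convex set; $\|\cdot\|$ is the Euclidean norm. A1$'$: $\sup_{k\in\{1,\dots,K\}}\big|\Pr(Y\notin\mathcal C_k(\mathbf X;\mathcal D_n)\mid\mathcal D_n)-\alpha\big|\to0$ in probability as $n\to\infty$. A2: $\inf_{\mathbf w\in\mathcal W^*}\|\widehat{\mathbf w}_n-\mathbf w\|\to0$ in probability as $n\to\infty$.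 A3: $\mathcal C_{\mathrm{comb}}(\mathbf X;\mathcal D_n):=\{y\in\mathbb R:\sum_{k=1}^K\widehat w_{n,k}\mathbf 1\{y\in\mathcal C_k(\mathbf X;\mathcal D_n)\}>1/2\}$. *)

theory Defs
  imports "HOL-Probability.Probability"
begin

definition cond_prob_given :: "'a measure \<Rightarrow> ('a \<Rightarrow> 'd) \<Rightarrow> 'd measure \<Rightarrow> 'a set \<Rightarrow> 'a \<Rightarrow> real" where
  "cond_prob_given M D S A = real_cond_exp M (vimage_algebra (space M) D S) (indicator A)"

definition conv_in_prob_zero :: "'a measure \<Rightarrow> (nat \<Rightarrow> 'a \<Rightarrow> real) \<Rightarrow> bool" where
  "conv_in_prob_zero M Z \<longleftrightarrow>
     (\<forall>e>0. (\<lambda>n. measure M {\<omega> \<in> space M. \<bar>Z n \<omega>\<bar> > e}) \<longlonglongrightarrow> 0)"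

definition simplex_set :: "(real ^ 'k::finite) set" where
  "simplex_set = {w. (\<forall>k. w $ k \<ge> 0) \<and> (\<Sum>k\<in>UNIV. w $ k) = 1}"

definition comb_set :: "(real ^ 'k::finite) \<Rightarrow> ('k \<Rightarrow> real set) \<Rightarrow> real set" where
  "comb_set w C = {y. (\<Sum>k\<in>UNIV. w $ k * indicator (C k) y) > 1/2}"

end

(*
  Every weight vector of W gives the kstar-th set more than 1/2 + 2 delta for some delta > 0,
  and the estimated weights lie within delta of W with probability tending to one; on that
  event, Y in C_kstar forces Y into the weighted-majority set.  The marginal miscoverage
  P(Y notin C_kstar) is the expectation of the conditional miscoverage, which is bounded and
  converges to alpha in probability, so it converges to alpha.  Hence
  P(Y in C_comb) >= 1 - P(Y notin C_kstar) - P(dist(w_n, W) > delta), whose limit is 1 - alpha.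
*)
theory Submission
  imports Defs
begin

lemma subalgebra_vimage_algebra:
  assumes "D \<in> measurable M S"
  shows "subalgebra M (vimage_algebra (space M) D S)"
  using assms by (auto simp: subalgebra_def sets_vimage_algebra2 measurable_def)

lemma ereal_le_Liminf_of_tendsto_lower:
  assumes "\<not> trivial_limit F" and "(f \<longlongrightarrow> L) F" and "eventually (\<lambda>x. f x \<le> g x) F"
  shows "ereal L \<le> Liminf F (\<lambda>x. ereal (g x))"
proof -
  have "Liminf F (\<lambda>x. ereal (f x)) = ereal L"
    using assms(1,2) by (intro lim_imp_Liminf) auto
  moreover have "Liminf F (\<lambda>x. ereal (f x)) \<le> Liminf F (\<lambda>x. ereal (g x))"
    using assms(3) by (intro Liminf_mono) (auto elim: eventually_mono)
  ultimately show ?thesis by simp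
qed

lemma nth_gt_if_infdist_less:
  fixes u :: "real ^ 'n"
  assumes "W \<noteq> {}" and "bdd_below ((\<lambda>v. v $ k) ` W)"
    and "infdist u W < (INF v\<in>W. v $ k) - c"
  shows "c < u $ k"
proof -
  obtain v where v: "v \<in> W" "dist u v < (INF v\<in>W. v $ k) - c"
    using assms(1,3) by (auto simp: infdist_notempty cInf_less_iff)
  have "v $ k - u $ k \<le> dist u v"
    using component_le_norm_cart[of "v - u" k] by (simp add: dist_norm norm_minus_commute)
  moreover have "(INF v\<in>W. v $ k) \<le> v $ k"
    using assms(2) v(1) by (rule cINF_lower)
  ultimately show ?thesis using v(2) by linarith
qed

lemma mem_comb_set_if_heavy_member:
  assumes "\<And>k. 0 \<le> w $ k" and "1/2 < w $ j" and "y \<in> C j"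
  shows "y \<in> comb_set w C"
proof -
  have "w $ j * indicator (C j) y \<le> (\<Sum>k\<in>UNIV. w $ k * indicator (C k) y)"
    using assms(1) by (intro member_le_sum) auto
  then show ?thesis using assms(2,3) by (simp add: comb_set_def)
qed

lemma mem_comb_set_if_near_heavy_set:
  assumes "w \<in> simplex_set" and "W \<subseteq> simplex_set" and "W \<noteq> {}"
    and "infdist w W < (INF v\<in>W. v $ j) - 1/2" and "y \<in> C j"
  shows "y \<in> comb_set w C"
proof (rule mem_comb_set_if_heavy_member)
  show "0 \<le> w $ k" for k
    using assms(1) by (simp add: simplex_set_def)
  have "bdd_below ((\<lambda>v. v $ j) ` W)"
    using assms(2) by (intro bdd_belowI[of _ 0]) (auto simp: simplex_set_def)
  then show "1/2 < w $ j"
    by (rule nth_gt_if_infdist_less[OF assms(3) _ assms(4)])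
qed (fact assms(5))

lemma borel_measurable_cond_prob_given [measurable]:
  "cond_prob_given M D S A \<in> borel_measurable M"
  unfolding cond_prob_given_def by simp

context prob_space
begin

context
  fixes D :: "'a \<Rightarrow> 'd" and S :: "'d measure" and A :: "'a set"
  assumes D: "D \<in> measurable M S" and A: "A \<in> events"
begin

interpretation finite_measure_subalgebra M "vimage_algebra (space M) D S"
  by unfold_locales (rule subalgebra_vimage_algebra[OF D])

private lemma integrable_indicator_event: "integrable M (indicator A :: 'a \<Rightarrow> real)"
  using A by (simp add: less_top[symmetric])

lemma integrable_cond_prob_given: "integrable M (cond_prob_given M D S A)"
  unfolding cond_prob_given_def by (rule real_cond_exp_int(1)[OF integrable_indicator_event])

lemma integral_cond_prob_given: "(\<integral>x. cond_prob_given M D S A x \<partial>M) = prob A"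
  unfolding cond_prob_given_def using real_cond_exp_int(2)[OF integrable_indicator_event] A by simp

lemma AE_cond_prob_given_bounds:
  "AE x in M. 0 \<le> cond_prob_given M D S A x \<and> cond_prob_given M D S A x \<le> 1"
proof -
  have "AE x in M. 0 \<le> cond_prob_given M D S A x"
    unfolding cond_prob_given_def by (rule real_cond_exp_ge_c[OF integrable_indicator_event]) auto
  moreover have "AE x in M. cond_prob_given M D S A x \<le> 1"
    unfolding cond_prob_given_def
    by (rule real_cond_exp_le_c[OF integrable_indicator_event]) (auto simp: indicator_def)
  ultimately show ?thesis by eventually_elim auto
qed

end

lemma conv_in_prob_zero_dominated:
  assumes "conv_in_prob_zero M Z'" and "\<And>n. Z' n \<in> borel_measurable M"
    and "\<And>n x. x \<in> space M \<Longrightarrow> \<bar>Z n x\<bar> \<le> \<bar>Z' n x\<bar>"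
  shows "conv_in_prob_zero M Z"
  unfolding conv_in_prob_zero_def
proof (intro allI impI)
  fix e :: real assume "e > 0"
  show "(\<lambda>n. prob {x \<in> space M. e < \<bar>Z n x\<bar>}) \<longlonglongrightarrow> 0"
  proof (rule tendsto_sandwich[OF _ _ tendsto_const])
    show "\<forall>\<^sub>F n in sequentially.
        prob {x \<in> space M. e < \<bar>Z n x\<bar>} \<le> prob {x \<in> space M. e < \<bar>Z' n x\<bar>}"
    proof (intro always_eventually allI finite_measure_mono)
      fix n
      show "{x \<in> space M. e < \<bar>Z n x\<bar>} \<subseteq> {x \<in> space M. e < \<bar>Z' n x\<bar>}"
        using assms(3) by (fastforce intro: less_le_trans)
      show "{x \<in> space M. e < \<bar>Z' n x\<bar>} \<in> events"
        using assms(2)[of n] by measurable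
    qed
    show "(\<lambda>n. prob {x \<in> space M. e < \<bar>Z' n x\<bar>}) \<longlonglongrightarrow> 0"
      using assms(1) \<open>e > 0\<close> unfolding conv_in_prob_zero_def by blast
  qed simp
qed

lemma conv_in_prob_zero_of_Max:
  fixes Z :: "nat \<Rightarrow> 'k::finite \<Rightarrow> 'a \<Rightarrow> real"
  assumes "conv_in_prob_zero M (\<lambda>n x. Max (range (\<lambda>k. \<bar>Z n k x\<bar>)))"
    and "\<And>n k. Z n k \<in> borel_measurable M"
  shows "conv_in_prob_zero M (\<lambda>n. Z n j)"
proof (rule conv_in_prob_zero_dominated[OF assms(1)])
  show "(\<lambda>x. Max (range (\<lambda>k. \<bar>Z n k x\<bar>))) \<in> borel_measurable M" for n
    using assms(2) by (intro borel_measurable_Max) auto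
qed (rule order_trans[OF Max_ge abs_ge_self], auto)

lemma expectation_tendsto_zero_if_conv_in_prob_zero:
  assumes Z: "\<And>n. Z n \<in> borel_measurable M"
    and bound: "\<And>n. AE x in M. \<bar>Z n x\<bar> \<le> B"
    and conv: "conv_in_prob_zero M Z"
  shows "(\<lambda>n. expectation (Z n)) \<longlonglongrightarrow> 0"
proof (rule tendstoI)
  fix \<epsilon> :: real assume "0 < \<epsilon>"
  define T where "T n = {x \<in> space M. \<epsilon>/2 < \<bar>Z n x\<bar>}" for n
  have "(\<lambda>n. prob (T n)) \<longlonglongrightarrow> 0"
    using conv \<open>0 < \<epsilon>\<close> unfolding T_def conv_in_prob_zero_def by (meson half_gt_zero)
  then have "(\<lambda>n. B * prob (T n)) \<longlonglongrightarrow> 0"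
    by (rule tendsto_mult_right_zero)
  then have "\<forall>\<^sub>F n in sequentially. B * prob (T n) < \<epsilon>/2"
    using \<open>0 < \<epsilon>\<close> by (intro order_tendstoD) auto
  then show "\<forall>\<^sub>F n in sequentially. dist (expectation (Z n)) 0 < \<epsilon>"
  proof eventually_elim
    case (elim n)
    have T: "T n \<in> events"
      using Z[of n] unfolding T_def by measurable
    have "AE x in M. \<bar>Z n x\<bar> \<le> \<epsilon>/2 + B * indicator (T n) x"
      using bound[of n] AE_space
      by eventually_elim (use \<open>0 < \<epsilon>\<close> in \<open>auto simp: T_def indicator_def\<close>)
    moreover have "integrable M (\<lambda>x. \<bar>Z n x\<bar>)"
      using Z[of n] bound[of n] by (intro integrable_const_bound[where B=B]) auto
    ultimately have "expectation (\<lambda>x. \<bar>Z n x\<bar>) \<le> expectation (\<lambda>x. \<epsilon>/2 + B * indicator (T n) x)"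
      using T by (intro integral_mono_AE) (auto simp: less_top[symmetric])
    also have "\<dots> = \<epsilon>/2 + B * prob (T n)"
      using T by (simp add: prob_space less_top[symmetric])
    finally have "\<bar>expectation (Z n)\<bar> \<le> \<epsilon>/2 + B * prob (T n)"
      using integral_abs_bound[of M "Z n"] by linarith
    then show ?case
      using elim by (simp add: dist_real_def)
  qed
qed

lemma prob_tendsto_if_cond_prob_given_conv_in_prob:
  assumes D: "\<And>n. D n \<in> measurable M (S n)" and E: "\<And>n. E n \<in> events"
    and "0 \<le> \<alpha>" "\<alpha> \<le> 1"
    and conv: "conv_in_prob_zero M (\<lambda>n x. cond_prob_given M (D n) (S n) (E n) x - \<alpha>)"
  shows "(\<lambda>n. prob (E n)) \<longlonglongrightarrow> \<alpha>"
proof -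
  have "(\<lambda>n. expectation (\<lambda>x. cond_prob_given M (D n) (S n) (E n) x - \<alpha>)) \<longlonglongrightarrow> 0"
  proof (rule expectation_tendsto_zero_if_conv_in_prob_zero[OF _ _ conv])
    show "(\<lambda>x. cond_prob_given M (D n) (S n) (E n) x - \<alpha>) \<in> borel_measurable M" for n
      by measurable
    show "AE x in M. \<bar>cond_prob_given M (D n) (S n) (E n) x - \<alpha>\<bar> \<le> 1" for n
      using AE_cond_prob_given_bounds[OF D[of n] E[of n]] by eventually_elim (use assms(3,4) in auto)
  qed
  moreover have "expectation (\<lambda>x. cond_prob_given M (D n) (S n) (E n) x - \<alpha>) = prob (E n) - \<alpha>" for n
    using integrable_cond_prob_given[OF D[of n] E[of n]] integral_cond_prob_given[OF D[of n] E[of n]]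
    by (simp add: prob_space)
  ultimately show ?thesis
    by (simp add: LIM_zero_iff)
qed

lemma prob_ge_if_compl_Un_subset:
  assumes "A \<in> events" "B \<in> events" "C \<in> events" and "space M - (A \<union> B) \<subseteq> C"
  shows "1 - prob A - prob B \<le> prob C"
proof -
  have "1 - prob A - prob B \<le> 1 - prob (A \<union> B)"
    using measure_Un_le[OF assms(1,2)] by simp
  also have "\<dots> = prob (space M - (A \<union> B))"
    using assms(1,2) by (simp add: prob_compl)
  also have "\<dots> \<le> prob C"
    using assms(3,4) by (rule finite_measure_mono[rotated])
  finally show ?thesis .
qed

lemma events_comb_set:
  fixes w :: "'a \<Rightarrow> real ^ 'k::finite"
  assumes "w \<in> borel_measurable M" and "\<And>k. {x \<in> space M. y x \<in> C k x} \<in> events"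
  shows "{x \<in> space M. y x \<in> comb_set (w x) (\<lambda>k. C k x)} \<in> events"
proof -
  have [measurable]: "(\<lambda>x. w x $ k) \<in> borel_measurable M" for k
    by (rule measurable_compose[OF assms(1) borel_measurable_nth])
  have [measurable]: "indicator {x \<in> space M. y x \<in> C k x} \<in> borel_measurable M" for k
    using assms(2) by (rule borel_measurable_indicator)
  have "{x \<in> space M. y x \<in> comb_set (w x) (\<lambda>k. C k x)}
      = {x \<in> space M. 1/2 < (\<Sum>k\<in>UNIV. w x $ k * indicator {x \<in> space M. y x \<in> C k x} x)}"
    by (auto simp: comb_set_def indicator_def)
  also have "\<dots> \<in> events"
    by measurable
  finally show ?thesis .
qed

end

theorem theorem3:
  fixes M :: "'a measure"
    and S :: "nat \<Rightarrow> 'd measure"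
    and D :: "nat \<Rightarrow> 'a \<Rightarrow> 'd"
    and X :: "nat \<Rightarrow> 'a \<Rightarrow> real ^ 'p::finite"
    and Y :: "nat \<Rightarrow> 'a \<Rightarrow> real"
    and \<X> :: "(real ^ 'p) set"
    and C :: "nat \<Rightarrow> 'k::finite \<Rightarrow> 'd \<Rightarrow> real ^ 'p \<Rightarrow> real set"
    and w :: "nat \<Rightarrow> 'a \<Rightarrow> real ^ 'k"
    and W :: "(real ^ 'k) set"
    and \<alpha> :: real
    and kstar :: 'k
  assumes K2: "CARD('k) \<ge> 2"
    and alpha: "0 < \<alpha>" "\<alpha> < 1"
    and M: "prob_space M"
    and D_meas: "\<And>n. D n \<in> measurable M (S n)"
    and X_meas: "\<And>n. X n \<in> borel_measurable M"
    and X_range: "\<And>n \<omega>. \<omega> \<in> space M \<Longrightarrow> X n \<omega> \<in> \<X>"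
    and Y_meas: "\<And>n. Y n \<in> borel_measurable M"
    and C_events: "\<And>n k. {\<omega> \<in> space M. Y n \<omega> \<in> C n k (D n \<omega>) (X n \<omega>)} \<in> sets M"
    and w_meas: "\<And>n. w n \<in> borel_measurable (vimage_algebra (space M) (D n) (S n))"
    and w_simplex: "\<And>n \<omega>. \<omega> \<in> space M \<Longrightarrow> w n \<omega> \<in> simplex_set"
    and W_ne: "W \<noteq> {}" and W_closed: "closed W" and W_convex: "convex W"
    and W_sub: "W \<subseteq> simplex_set"
    and A1': "conv_in_prob_zero M (\<lambda>n \<omega>. Max (range (\<lambda>k.
                 \<bar>cond_prob_given M (D n) (S n)
                    {\<omega>' \<in> space M. Y n \<omega>' \<notin> C n k (D n \<omega>') (X n \<omega>')} \<omega> - \<alpha>\<bar>)))"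
    and A2: "conv_in_prob_zero M (\<lambda>n \<omega>. infdist (w n \<omega>) W)"
    and kstar: "(INF v\<in>W. v $ kstar) > 1/2"
  shows "liminf (\<lambda>n. ereal (measure M
            {\<omega> \<in> space M. Y n \<omega> \<in> comb_set (w n \<omega>) (\<lambda>k. C n k (D n \<omega>) (X n \<omega>))}))
           \<ge> ereal (1 - \<alpha>)"
proof -
  interpret prob_space M by fact
  define Miss where "Miss n k = {\<omega> \<in> space M. Y n \<omega> \<notin> C n k (D n \<omega>) (X n \<omega>)}" for n k
  define \<delta> where "\<delta> = ((INF v\<in>W. v $ kstar) - 1/2) / 2"
  define Far where "Far n = {\<omega> \<in> space M. \<delta> < \<bar>infdist (w n \<omega>) W\<bar>}" for n
  define Comb where
    "Comb n = {\<omega> \<in> space M. Y n \<omega> \<in> comb_set (w n \<omega>) (\<lambda>k. C n k (D n \<omega>) (X n \<omega>))}" for n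
  have w_M[measurable]: "w n \<in> borel_measurable M" for n
    by (rule measurable_from_subalg[OF subalgebra_vimage_algebra[OF D_meas] w_meas])
  have Miss_events: "Miss n k \<in> events" for n k
    unfolding Miss_def using C_events by (rule sets.sets_Collect_neg)
  have "(\<lambda>n. prob (Miss n kstar)) \<longlonglongrightarrow> \<alpha>"
  proof (rule prob_tendsto_if_cond_prob_given_conv_in_prob[OF D_meas Miss_events])
    show "conv_in_prob_zero M (\<lambda>n x. cond_prob_given M (D n) (S n) (Miss n kstar) x - \<alpha>)"
      by (intro conv_in_prob_zero_of_Max[OF A1'[folded Miss_def]]) auto
  qed (use alpha in auto)
  moreover have "(\<lambda>n. prob (Far n)) \<longlonglongrightarrow> 0"
    using A2 kstar unfolding conv_in_prob_zero_def Far_def \<delta>_def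
    by (meson diff_gt_0_iff_gt half_gt_zero)
  moreover have "1 - prob (Miss n kstar) - prob (Far n) \<le> prob (Comb n)" for n
  proof (rule prob_ge_if_compl_Un_subset[OF Miss_events])
    have [measurable]: "(\<lambda>\<omega>. infdist (w n \<omega>) W) \<in> borel_measurable M"
      by (intro measurable_compose[OF w_M] borel_measurable_continuous_onI continuous_intros)
    show "Far n \<in> events"
      unfolding Far_def by measurable
    show "Comb n \<in> events"
      unfolding Comb_def using C_events by (rule events_comb_set[OF w_M])
    show "space M - (Miss n kstar \<union> Far n) \<subseteq> Comb n"
    proof
      fix \<omega> assume \<omega>: "\<omega> \<in> space M - (Miss n kstar \<union> Far n)"
      then have "infdist (w n \<omega>) W < (INF v\<in>W. v $ kstar) - 1/2"
        using kstar by (auto simp: Far_def \<delta>_def)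
      with \<omega> show "\<omega> \<in> Comb n"
        by (auto simp: Miss_def Comb_def intro: mem_comb_set_if_near_heavy_set[OF w_simplex W_sub W_ne])
    qed
  qed
  ultimately show ?thesis
    unfolding Comb_def[symmetric]
    by (intro ereal_le_Liminf_of_tendsto_lower[where f = "\<lambda>n. 1 - prob (Miss n kstar) - prob (Far n)"])
      (auto intro!: tendsto_eq_intros)
qed

end
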